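(* Let $q\ge 2$ and let $D$ be a directed graph on $n$ vertices which has an induced acyclic subgraph on at least $n/2$ vertices. If $D$ is $q$-solvable, then $n\ge 2\alpha(q-1)$, where $\alpha\approx 0.567$ is the unique real number satisfying $\alpha+\ln\alpha=0$.
   Context: A directed graph $D=(V,E)$ has arcs $E \subseteq \{(u,v)\in V^2 : u \neq v\}$ (bidirectional pairs allowed). An induced subgraph is acyclic if it contains no directed cycle. $N^-(v)=\{u:(u,v)\in E\}$. For $q\ge2$ let $[q]=\{0,\dots,q-1\}$. A $D$-function over $[q]$ is a map $f=(f_v)_{v\in V}:[q]^V\to[q]^V$ with each $f_v(x)$ depending only on $(x_u)_{u\in N^-(v)}$. $D$ is $q$-solvable if some $D$-function $f$ over $[q]$ has the property that for every $x\in[q]^V$ there is $v$ with $f_v(x)=x_v$. *)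

theory Defs
  imports Complex_Main "HOL-Library.FuncSet"
begin

definition digraph :: "'a set \<Rightarrow> ('a \<times> 'a) set \<Rightarrow> bool" where
  "digraph V E \<longleftrightarrow> finite V \<and> E \<subseteq> V \<times> V \<and> (\<forall>v. (v, v) \<notin> E)"

definition in_nbrs :: "('a \<times> 'a) set \<Rightarrow> 'a \<Rightarrow> 'a set" where
  "in_nbrs E v = {u. (u, v) \<in> E}"

definition configs :: "'a set \<Rightarrow> nat \<Rightarrow> ('a \<Rightarrow> nat) set" where
  "configs V q = V \<rightarrow>\<^sub>E {0..<q}"

definition is_D_function :: "'a set \<Rightarrow> ('a \<times> 'a) set \<Rightarrow> nat \<Rightarrow> ('a \<Rightarrow> ('a \<Rightarrow> nat) \<Rightarrow> nat) \<Rightarrow> bool" where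
  "is_D_function V E q f \<longleftrightarrow>
     (\<forall>v\<in>V. \<forall>x\<in>configs V q. f v x < q) \<and>
     (\<forall>v\<in>V. \<forall>x\<in>configs V q. \<forall>y\<in>configs V q.
        (\<forall>u\<in>in_nbrs E v. x u = y u) \<longrightarrow> f v x = f v y)"

definition q_solvable :: "'a set \<Rightarrow> ('a \<times> 'a) set \<Rightarrow> nat \<Rightarrow> bool" where
  "q_solvable V E q \<longleftrightarrow>
     (\<exists>f. is_D_function V E q f \<and> (\<forall>x\<in>configs V q. \<exists>v\<in>V. f v x = x v))"

definition induced_acyclic :: "('a \<times> 'a) set \<Rightarrow> 'a set \<Rightarrow> bool" where
  "induced_acyclic E S \<longleftrightarrow> acyclic (E \<inter> (S \<times> S))"

definition alpha_const :: real where
  "alpha_const = (THE a. a > 0 \<and> a + ln a = 0)"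

end

theory Submission
  imports Defs
begin

text \<open>Let W be the set of configurations with no fixed point inside S. Since S induces an
  acyclic subgraph, it has a vertex v without out-neighbours in S; the local functions at the
  other vertices of S ignore x v, and f v ignores x v as well, so exactly a fraction (q-1)/q of
  the configurations counted for S - {v} survive. Hence |W| = q^n ((q-1)/q)^|S|. Solvability
  puts every configuration of W into a fixed-point set of some vertex outside S, and each such
  set has q^(n-1) elements, so ((q-1)/q)^s \<le> t/q with s = |S| \<ge> t = n - s. Taking logarithms
  with \<sigma> = s/(q-1), \<tau> = t/(q-1) gives \<sigma> + ln \<tau> > 0, and the concavity of ln turns this into
  m + ln m > 0 for the mean m = (\<sigma>+\<tau>)/2, i.e. m \<ge> \<alpha>.\<close>

lemma finite_configs: "finite V \<Longrightarrow> finite (configs V q)"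
  unfolding configs_def by (simp add: finite_PiE)

lemma card_configs: "finite V \<Longrightarrow> card (configs V q) = q ^ card V"
  unfolding configs_def by (simp add: card_PiE)

lemma configs_less: "x \<in> configs V q \<Longrightarrow> v \<in> V \<Longrightarrow> x v < q"
  unfolding configs_def by auto

lemma configs_upd: "x \<in> configs V q \<Longrightarrow> v \<in> V \<Longrightarrow> c < q \<Longrightarrow> x(v := c) \<in> configs V q"
  unfolding configs_def by (auto simp: PiE_iff extensional_def)

lemma D_function_less:
  "is_D_function V E q f \<Longrightarrow> v \<in> V \<Longrightarrow> x \<in> configs V q \<Longrightarrow> f v x < q"
  unfolding is_D_function_def by blast

lemma D_function_upd_non_in_nbr:
  assumes "is_D_function V E q f" and "u \<in> V" and "v \<in> V" and "(v, u) \<notin> E"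
    and "x \<in> configs V q" and "c < q"
  shows "f u (x(v := c)) = f u x"
proof -
  have "\<forall>w\<in>in_nbrs E u. (x(v := c)) w = x w"
    using assms(4) unfolding in_nbrs_def by auto
  moreover have "x(v := c) \<in> configs V q"
    using assms(5,3,6) by (rule configs_upd)
  ultimately show ?thesis
    using assms(1,2,5) unfolding is_D_function_def by blast
qed

lemma acyclic_induced_has_sink:
  assumes "finite A" and "A \<noteq> {}" and "acyclic (E \<inter> A \<times> A)"
  obtains v where "v \<in> A" and "\<And>w. w \<in> A \<Longrightarrow> (v, w) \<notin> E"
proof -
  have "finite (E \<inter> A \<times> A)"
    using assms(1) by blast
  then have "wf ((E \<inter> A \<times> A)\<inverse>)"
    using assms(3) by (rule finite_acyclic_wf_converse)
  with assms(2) obtain v where "v \<in> A" and "\<And>w. (w, v) \<in> (E \<inter> A \<times> A)\<inverse> \<Longrightarrow> w \<notin> A"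
    by (metis ex_in_conv wfE_min)
  then show thesis
    using that by blast
qed

text \<open>Each line through A in direction v contains exactly one point with g x = x v.\<close>

lemma card_fixed_coordinate_mult:
  assumes "finite A" and "A \<subseteq> configs V q" and "v \<in> V" and "0 < q"
    and upd: "\<And>x c. x \<in> A \<Longrightarrow> c < q \<Longrightarrow> x(v := c) \<in> A"
    and g_upd: "\<And>x c. x \<in> A \<Longrightarrow> c < q \<Longrightarrow> g (x(v := c)) = g x"
    and g_less: "\<And>x. x \<in> A \<Longrightarrow> g x < q"
  shows "card {x\<in>A. g x = x v} * q = card A"
proof -
  have less: "x v < q" if "x \<in> A" for x
    using configs_less[OF subsetD[OF assms(2) that] assms(3)] .
  define A0 where "A0 = {x\<in>A. x v = 0}"
  have "bij_betw (\<lambda>x. x(v := 0)) {x\<in>A. g x = x v} A0"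
  proof (rule bij_betw_byWitness[where f' = "\<lambda>y. y(v := g y)"])
    show "\<forall>x\<in>{x\<in>A. g x = x v}. (x(v := 0))(v := g (x(v := 0))) = x"
      using g_upd \<open>0 < q\<close> by fastforce
    show "\<forall>y\<in>A0. (y(v := g y))(v := 0) = y"
      unfolding A0_def by auto
    show "(\<lambda>x. x(v := 0)) ` {x\<in>A. g x = x v} \<subseteq> A0"
      unfolding A0_def using upd \<open>0 < q\<close> by auto
    show "(\<lambda>y. y(v := g y)) ` A0 \<subseteq> {x\<in>A. g x = x v}"
      unfolding A0_def using upd g_upd g_less by auto
  qed
  then have "card {x\<in>A. g x = x v} = card A0"
    by (rule bij_betw_same_card)
  moreover have "bij_betw (\<lambda>x. (x(v := 0), x v)) A (A0 \<times> {0..<q})"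
    by (rule bij_betw_byWitness[where f' = "\<lambda>(y, c). y(v := c)"])
      (use upd less \<open>0 < q\<close> in \<open>auto simp: A0_def\<close>)
  then have "card A = card A0 * q"
    by (simp add: bij_betw_same_card card_cartesian_product)
  ultimately show ?thesis
    by simp
qed

lemma card_fixed_points_at:
  assumes "digraph V E" and "is_D_function V E q f" and "v \<in> V" and "0 < q"
  shows "card {x\<in>configs V q. f v x = x v} * q = q ^ card V"
proof -
  have "(v, v) \<notin> E" and "finite V"
    using assms(1) unfolding digraph_def by auto
  have "card {x\<in>configs V q. f v x = x v} * q = card (configs V q)"
    by (rule card_fixed_coordinate_mult[OF finite_configs[OF \<open>finite V\<close>] subset_refl
          \<open>v \<in> V\<close> \<open>0 < q\<close>])
      (use configs_upd D_function_upd_non_in_nbr[OF assms(2,3,3) \<open>(v, v) \<notin> E\<close>]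
           D_function_less[OF assms(2,3)] \<open>v \<in> V\<close> in auto)
  then show ?thesis
    using card_configs[OF \<open>finite V\<close>] by simp
qed

text \<open>A vertex v of A without out-neighbours in A does not influence the local functions at
  A - {v}, nor its own; so v cuts the configurations with no fixed point in A - {v} down by a
  factor (q-1)/q.\<close>

lemma card_no_fixed_point_remove_sink:
  assumes "digraph V E" and "is_D_function V E q f" and "0 < q"
    and "A \<subseteq> V" and "v \<in> A" and sink: "\<And>w. w \<in> A \<Longrightarrow> (v, w) \<notin> E"
  defines "W \<equiv> {x\<in>configs V q. \<forall>u\<in>A - {v}. f u x \<noteq> x u}"
  shows "card {x\<in>configs V q. \<forall>u\<in>A. f u x \<noteq> x u} * q = (q - 1) * card W"
proof -
  have "finite V" and "(v, v) \<notin> E"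
    using assms(1) unfolding digraph_def by auto
  have "v \<in> V"
    using assms(4,5) by blast
  have W_upd: "x(v := c) \<in> W" if "x \<in> W" "c < q" for x c
  proof -
    have "f u (x(v := c)) = f u x" if "u \<in> A - {v}" for u
      using D_function_upd_non_in_nbr[OF assms(2) _ \<open>v \<in> V\<close> sink] that \<open>x \<in> W\<close> \<open>c < q\<close> assms(4)
      unfolding W_def by blast
    then show ?thesis
      using \<open>x \<in> W\<close> \<open>c < q\<close> \<open>v \<in> V\<close> configs_upd unfolding W_def by auto
  qed
  have "finite W"
    unfolding W_def using finite_configs[OF \<open>finite V\<close>] by simp
  have fixed: "card {x\<in>W. f v x = x v} * q = card W"
    by (rule card_fixed_coordinate_mult[OF \<open>finite W\<close> _ \<open>v \<in> V\<close> \<open>0 < q\<close> W_upd])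
      (use D_function_upd_non_in_nbr[OF assms(2) \<open>v \<in> V\<close> \<open>v \<in> V\<close> \<open>(v, v) \<notin> E\<close>]
           D_function_less[OF assms(2) \<open>v \<in> V\<close>] in \<open>auto simp: W_def\<close>)
  have "card W = card {x\<in>W. f v x = x v} + card {x\<in>W. f v x \<noteq> x v}"
    using \<open>finite W\<close> by (subst card_Un_disjoint[symmetric]) (auto intro: arg_cong[where f = card])
  with fixed \<open>0 < q\<close> have "card {x\<in>W. f v x \<noteq> x v} * q = (q - 1) * card W"
    by (simp add: algebra_simps diff_mult_distrib)
  moreover have "{x\<in>configs V q. \<forall>u\<in>A. f u x \<noteq> x u} = {x\<in>W. f v x \<noteq> x v}"
    unfolding W_def using \<open>v \<in> A\<close> by auto
  ultimately show ?thesis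
    by simp
qed

lemma card_no_fixed_point_on_acyclic:
  assumes "digraph V E" and "is_D_function V E q f" and "0 < q"
    and "S \<subseteq> V" and "induced_acyclic E S"
  shows "card {x\<in>configs V q. \<forall>u\<in>S. f u x \<noteq> x u} * q ^ card S = (q - 1) ^ card S * q ^ card V"
proof -
  have "finite V"
    using assms(1) unfolding digraph_def by blast
  then have "finite S"
    using assms(4) finite_subset by blast
  then show ?thesis
    using assms(4,5)
  proof (induction S rule: finite_remove_induct)
    case empty
    then show ?case
      using card_configs[OF \<open>finite V\<close>] by simp
  next
    case (remove A)
    have "acyclic (E \<inter> A \<times> A)"
      using remove.prems(2) unfolding induced_acyclic_def .
    then obtain v where "v \<in> A" and sink: "\<And>w. w \<in> A \<Longrightarrow> (v, w) \<notin> E"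
      using acyclic_induced_has_sink remove.hyps(1,2) by blast
    have "induced_acyclic E (A - {v})"
      using remove.prems(2) unfolding induced_acyclic_def by (rule acyclic_subset) blast
    then have IH: "card {x\<in>configs V q. \<forall>u\<in>A - {v}. f u x \<noteq> x u} * q ^ card (A - {v})
        = (q - 1) ^ card (A - {v}) * q ^ card V"
      using remove.IH[OF \<open>v \<in> A\<close>] remove.prems(1) by blast
    have "card {x\<in>configs V q. \<forall>u\<in>A. f u x \<noteq> x u} * q * q ^ card (A - {v})
        = (q - 1) * (card {x\<in>configs V q. \<forall>u\<in>A - {v}. f u x \<noteq> x u} * q ^ card (A - {v}))"
      using card_no_fixed_point_remove_sink[OF assms(1-3) remove.prems(1) \<open>v \<in> A\<close> sink] by simp
    moreover have "card A = Suc (card (A - {v}))"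
      using \<open>v \<in> A\<close> remove.hyps(1) by (metis card_Suc_Diff1)
    ultimately show ?case
      using IH by (simp add: algebra_simps)
  qed
qed

lemma card_no_fixed_point_solvable_bound:
  assumes "digraph V E" and "is_D_function V E q f" and "0 < q"
    and fixed: "\<And>x. x \<in> configs V q \<Longrightarrow> \<exists>v\<in>V. f v x = x v"
    and "S \<subseteq> V" and "induced_acyclic E S"
  shows "(q - 1) ^ card S * q \<le> card (V - S) * q ^ card S"
proof -
  have "finite V"
    using assms(1) unfolding digraph_def by blast
  define W where "W = {x\<in>configs V q. \<forall>u\<in>S. f u x \<noteq> x u}"
  define B where "B v = {x\<in>configs V q. f v x = x v}" for v
  have "W \<subseteq> (\<Union>v\<in>V - S. B v)"
    unfolding W_def B_def using fixed by blast
  then have "card W \<le> card (\<Union>v\<in>V - S. B v)"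
    by (intro card_mono) (auto simp: B_def finite_configs \<open>finite V\<close>)
  also have "\<dots> \<le> (\<Sum>v\<in>V - S. card (B v))"
    by (rule card_UN_le) (use \<open>finite V\<close> in auto)
  finally have "card W * q \<le> (\<Sum>v\<in>V - S. card (B v)) * q"
    by simp
  also have "\<dots> = (\<Sum>v\<in>V - S. card (B v) * q)"
    by (simp add: sum_distrib_right)
  also have "\<dots> = card (V - S) * q ^ card V"
    using card_fixed_points_at[OF assms(1,2) _ \<open>0 < q\<close>] unfolding B_def by simp
  finally have "card W * q * q ^ card S \<le> card (V - S) * q ^ card V * q ^ card S"
    by simp
  moreover have "card W * q ^ card S = (q - 1) ^ card S * q ^ card V"
    unfolding W_def using card_no_fixed_point_on_acyclic[OF assms(1,2,3,5,6)] .
  ultimately have "((q - 1) ^ card S * q) * q ^ card V \<le> (card (V - S) * q ^ card S) * q ^ card V"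
    by (simp add: algebra_simps)
  then show ?thesis
    using \<open>0 < q\<close> by simp
qed

lemma plus_ln_strict_mono:
  fixes x y :: real
  assumes "0 < x" and "x < y"
  shows "x + ln x < y + ln y"
proof -
  have "ln x < ln y"
    using assms by simp
  with assms show ?thesis
    by linarith
qed

lemma alpha_const: "0 < alpha_const" "alpha_const + ln alpha_const = 0"
proof -
  have "0 < exp (-1 :: real)"
    by simp
  have "continuous_on {exp (-1)..1} (\<lambda>x::real. x + ln x)"
  proof (intro continuous_intros ballI)
    fix x :: real
    assume "x \<in> {exp (-1)..1}"
    with \<open>0 < exp (-1)\<close> show "x \<noteq> 0"
      by auto
  qed
  then have "\<exists>x. exp (-1) \<le> x \<and> x \<le> 1 \<and> x + ln x = (0::real)"
    by (rule IVT'[of "\<lambda>x. x + ln x", rotated 3]) auto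
  then obtain a :: real where "exp (-1) \<le> a" and a: "a + ln a = 0"
    by blast
  with \<open>0 < exp (-1)\<close> have "0 < a"
    by linarith
  have "b = a" if "0 < b" and "b + ln b = 0" for b
  proof (cases b a rule: linorder_cases)
    case less
    with plus_ln_strict_mono[OF \<open>0 < b\<close>] a that(2) show ?thesis
      by fastforce
  next
    case greater
    with plus_ln_strict_mono[OF \<open>0 < a\<close>] a that(2) show ?thesis
      by fastforce
  qed
  then have "alpha_const = a"
    unfolding alpha_const_def using \<open>0 < a\<close> a by (intro the_equality) blast+
  with \<open>0 < a\<close> a show "0 < alpha_const" "alpha_const + ln alpha_const = 0"
    by simp_all
qed

lemma alpha_const_le:
  fixes m :: real
  assumes "0 < m" and "0 < m + ln m"
  shows "alpha_const \<le> m"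
  using plus_ln_strict_mono[of m alpha_const] assms alpha_const by force

text \<open>Here a = q - 1 and the premise is the counting bound ((q-1)/q)^s \<le> t/q; it is
  weakened through ln (1 + 1/a) \<le> 1/a.\<close>

lemma ln_bound_of_power_bound:
  fixes a t :: real and s :: nat
  assumes "1 \<le> a" and "0 < t" and bound: "a ^ s * (a + 1) \<le> t * (a + 1) ^ s"
  shows "0 < s / a + ln (t / a)"
proof -
  have "ln (a ^ s * (a + 1)) \<le> ln (t * (a + 1) ^ s)"
    using bound assms(1,2) by simp
  then have "s * ln a + ln (a + 1) \<le> ln t + s * ln (a + 1)"
    using assms(1,2) by (simp add: ln_mult ln_realpow)
  moreover have "ln (a + 1) - ln a \<le> 1 / a"
    using ln_le_minus_one[of "(a + 1) / a"] assms(1) by (simp add: ln_div field_simps)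
  then have "s * ln (a + 1) - s * ln a \<le> s / a"
    using mult_left_mono[of _ _ "real s"] by (fastforce simp: right_diff_distrib)
  moreover have "ln a < ln (a + 1)"
    using assms(1) by simp
  ultimately have "0 < s / a + (ln t - ln a)"
    by linarith
  then show ?thesis
    using assms(1,2) by (simp add: ln_div)
qed

text \<open>Concavity of ln at the mean m = (\<sigma>+\<tau>)/2: ln \<tau> \<le> ln m + \<tau>/m - 1, and for m < 1 the
  term \<tau>/m - \<tau> is at most 1 - m because \<tau> \<le> m.\<close>

lemma mean_plus_ln_pos:
  fixes \<sigma> \<tau> :: real
  assumes "0 < \<tau>" and "\<tau> \<le> \<sigma>" and "0 < \<sigma> + ln \<tau>"
  defines "m \<equiv> (\<sigma> + \<tau>) / 2"
  shows "0 < m + ln m"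
proof (cases "1 \<le> m")
  case True
  then show ?thesis
    using ln_ge_zero[of m] by linarith
next
  case False
  have "0 < m" and "\<tau> \<le> m" and "\<sigma> + \<tau> = 2 * m"
    using assms(1,2) unfolding m_def by auto
  have "ln (\<tau> / m) \<le> \<tau> / m - 1"
    using \<open>0 < m\<close> assms(1) by (intro ln_le_minus_one) simp
  then have "ln \<tau> \<le> ln m + (\<tau> - m) / m"
    using \<open>0 < m\<close> assms(1) by (simp add: ln_div diff_divide_distrib)
  moreover have "(\<tau> - m) * 1 \<le> (\<tau> - m) * m"
    using \<open>\<tau> \<le> m\<close> False by (intro mult_left_mono_neg) linarith+
  then have "(\<tau> - m) / m \<le> \<tau> - m"
    using \<open>0 < m\<close> by (simp add: divide_le_eq)
  ultimately show ?thesis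
    using assms(3) \<open>\<sigma> + \<tau> = 2 * m\<close> by linarith
qed

lemma alpha_bound_of_power_bound:
  fixes q s t :: nat
  assumes "2 \<le> q" and "t \<le> s" and bound: "(q - 1) ^ s * q \<le> t * q ^ s"
  shows "2 * alpha_const * (real q - 1) \<le> real (s + t)"
proof -
  define a where "a = real q - 1"
  have "1 \<le> a" and "real (q - 1) = a" and "real q = a + 1"
    using assms(1) unfolding a_def by auto
  have "0 < t"
    using bound assms(1) by (cases t) auto
  have "real ((q - 1) ^ s * q) \<le> real (t * q ^ s)"
    using bound by (simp only: of_nat_le_iff)
  then have "a ^ s * (a + 1) \<le> real t * (a + 1) ^ s"
    unfolding of_nat_mult of_nat_power \<open>real (q - 1) = a\<close> \<open>real q = a + 1\<close> .
  then have "0 < s / a + ln (t / a)"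
    using ln_bound_of_power_bound \<open>1 \<le> a\<close> \<open>0 < t\<close> by simp
  moreover have "0 < t / a" and "t / a \<le> s / a"
    using \<open>1 \<le> a\<close> \<open>0 < t\<close> assms(2) by (auto intro: divide_right_mono)
  ultimately have "0 < (s / a + t / a) / 2 + ln ((s / a + t / a) / 2)"
    by (intro mean_plus_ln_pos)
  moreover have "0 < (s / a + t / a) / 2"
    using \<open>0 < t / a\<close> \<open>t / a \<le> s / a\<close> by (simp add: add_pos_nonneg)
  ultimately have "alpha_const \<le> (s / a + t / a) / 2"
    by (intro alpha_const_le)
  then have "2 * alpha_const * a \<le> 2 * ((s / a + t / a) / 2) * a"
    using \<open>1 \<le> a\<close> by (intro mult_right_mono) auto
  also have "\<dots> = real (s + t)"
    using \<open>1 \<le> a\<close> by (simp add: field_simps)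
  finally show ?thesis
    unfolding a_def .
qed

theorem corollary15:
  fixes V :: "'a set" and E :: "('a \<times> 'a) set" and q :: nat and S :: "'a set"
  assumes "q \<ge> 2"
    and "digraph V E"
    and "S \<subseteq> V" and "induced_acyclic E S" and "real (card S) \<ge> real (card V) / 2"
    and "q_solvable V E q"
  shows "real (card V) \<ge> 2 * alpha_const * (real q - 1)"
proof -
  obtain f where "is_D_function V E q f" and "\<forall>x\<in>configs V q. \<exists>v\<in>V. f v x = x v"
    using assms(6) unfolding q_solvable_def by blast
  then have bound: "(q - 1) ^ card S * q \<le> card (V - S) * q ^ card S"
    using card_no_fixed_point_solvable_bound[OF assms(2) _ _ _ assms(3,4)] assms(1) by auto
  have "finite V"
    using assms(2) unfolding digraph_def by blast
  then have "card V = card S + card (V - S)"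
    using assms(3) by (metis card_Diff_subset card_mono finite_subset le_add_diff_inverse)
  moreover from this have "card (V - S) \<le> card S"
    using assms(5) by linarith
  ultimately show ?thesis
    using alpha_bound_of_power_bound[OF assms(1) _ bound] by simp
qed

end
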